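(* There is no polynomial-time algorithm that, given a canonical linear game on players $\{1,\dots,n\}$ as the list of characteristic vectors of its ceiling coalitions, outputs the list of its roof coalitions; and there is no polynomial-time algorithm that, given a canonical linear game as the list of its roof coalitions, outputs the list of its ceiling coalitions. (Here polynomial time means polynomial in the size of the input list.)
   Context: A simple game on $N=\{1,\dots,n\}$ is a map $v:2^N\to\{0,1\}$; it is monotonic if $S\subseteq T\Rightarrow v(S)\le v(T)$. Write $i\succeq j$ if $v(S\cup\{i\})\ge v(S\cup\{j\})$ for all $S\subseteq N\setminus\{i,j\}$; a canonical linear game is a monotonic simple game with $1\succeq2\succeq\cdots\succeq n$. A coalition $S'$ is a direct left-shift of $S$ if there is $m\in S$, $2\le m\le n$, $m-1\notin S$, with $S'=(S\setminus\{m\})\cup\{m-1\}$; a left-shift is obtained by one or more successive direct left-shifts; right-shifts are defined symmetrically. A roof coalition is a minimal winning coalition all of whose right-shifts are losing; a ceiling coalition is a maximal losing coalition all of whose left-shifts are winning. A canonical linear game is determined by its list of roofs, and also by its list of ceilings. A coalition $S$ is encoded by its characteristic vector in $\{0,1\}^n$. *)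

theory Defs
  imports Main
begin

text \<open>A simple game on N = {1..n} is a predicate v on coalitions; only its values on
  subsets of {1..n} are relevant.\<close>

definition monotonic_game :: "nat \<Rightarrow> (nat set \<Rightarrow> bool) \<Rightarrow> bool" where
  "monotonic_game n v \<longleftrightarrow> (\<forall>S T. S \<subseteq> T \<and> T \<subseteq> {1..n} \<and> v S \<longrightarrow> v T)"

definition desirable :: "nat \<Rightarrow> (nat set \<Rightarrow> bool) \<Rightarrow> nat \<Rightarrow> nat \<Rightarrow> bool" where
  "desirable n v i j \<longleftrightarrow>
     (\<forall>S. S \<subseteq> {1..n} - {i, j} \<longrightarrow> (v (S \<union> {j}) \<longrightarrow> v (S \<union> {i})))"

definition canonical_linear :: "nat \<Rightarrow> (nat set \<Rightarrow> bool) \<Rightarrow> bool" where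
  "canonical_linear n v \<longleftrightarrow> monotonic_game n v \<and>
     (\<forall>i j. 1 \<le> i \<and> i \<le> j \<and> j \<le> n \<longrightarrow> desirable n v i j)"

definition direct_left_shift :: "nat \<Rightarrow> nat set \<Rightarrow> nat set \<Rightarrow> bool" where
  "direct_left_shift n S S' \<longleftrightarrow>
     (\<exists>m\<in>S. 2 \<le> m \<and> m \<le> n \<and> m - 1 \<notin> S \<and> S' = (S - {m}) \<union> {m - 1})"

definition direct_right_shift :: "nat \<Rightarrow> nat set \<Rightarrow> nat set \<Rightarrow> bool" where
  "direct_right_shift n S S' \<longleftrightarrow>
     (\<exists>m\<in>S. 1 \<le> m \<and> m + 1 \<le> n \<and> m + 1 \<notin> S \<and> S' = (S - {m}) \<union> {m + 1})"

definition left_shift :: "nat \<Rightarrow> nat set \<Rightarrow> nat set \<Rightarrow> bool" where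
  "left_shift n = (direct_left_shift n)\<^sup>+\<^sup>+"

definition right_shift :: "nat \<Rightarrow> nat set \<Rightarrow> nat set \<Rightarrow> bool" where
  "right_shift n = (direct_right_shift n)\<^sup>+\<^sup>+"

definition minimal_winning :: "nat \<Rightarrow> (nat set \<Rightarrow> bool) \<Rightarrow> nat set \<Rightarrow> bool" where
  "minimal_winning n v S \<longleftrightarrow> S \<subseteq> {1..n} \<and> v S \<and> (\<forall>T. T \<subset> S \<longrightarrow> \<not> v T)"

definition maximal_losing :: "nat \<Rightarrow> (nat set \<Rightarrow> bool) \<Rightarrow> nat set \<Rightarrow> bool" where
  "maximal_losing n v S \<longleftrightarrow> S \<subseteq> {1..n} \<and> \<not> v S \<and>
     (\<forall>T. S \<subset> T \<and> T \<subseteq> {1..n} \<longrightarrow> v T)"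

definition roofs :: "nat \<Rightarrow> (nat set \<Rightarrow> bool) \<Rightarrow> nat set set" where
  "roofs n v = {S. minimal_winning n v S \<and> (\<forall>S'. right_shift n S S' \<longrightarrow> \<not> v S')}"

definition ceilings :: "nat \<Rightarrow> (nat set \<Rightarrow> bool) \<Rightarrow> nat set set" where
  "ceilings n v = {S. maximal_losing n v S \<and> (\<forall>S'. left_shift n S S' \<longrightarrow> v S')}"

text \<open>Characteristic vector of a coalition S of {1..n}: entry k (0-based) is [k+1 \<in> S].\<close>
definition charvec :: "nat \<Rightarrow> nat set \<Rightarrow> bool list" where
  "charvec n S = map (\<lambda>i. i \<in> S) [1..<n+1]"

text \<open>A deterministic sequential machine with arbitrary state space and arbitrary
  (unit-cost) local steps, which writes at most one output symbol per step.
  Every standard model (Turing machines, RAMs) is an instance, so impossibility of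
  polynomial time here implies impossibility of polynomial time there.\<close>

datatype sym = Zero | One | Sep

record 's machine =
  init :: "nat \<times> bool list list \<Rightarrow> 's"
  step :: "'s \<Rightarrow> 's \<times> sym option"
  final :: "'s \<Rightarrow> bool"

fun config :: "'s machine \<Rightarrow> nat \<times> bool list list \<Rightarrow> nat \<Rightarrow> 's" where
  "config M x 0 = init M x"
| "config M x (Suc t) = fst (step M (config M x t))"

fun outputs :: "'s machine \<Rightarrow> nat \<times> bool list list \<Rightarrow> nat \<Rightarrow> sym list" where
  "outputs M x 0 = []"
| "outputs M x (Suc t) = outputs M x t @
     (case snd (step M (config M x t)) of None \<Rightarrow> [] | Some s \<Rightarrow> [s])"

definition encode :: "bool list list \<Rightarrow> sym list" where
  "encode L = concat (map (\<lambda>v. map (\<lambda>b. if b then One else Zero) v @ [Sep]) L)"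

definition input_size :: "nat \<times> bool list list \<Rightarrow> nat" where
  "input_size x = fst x + sum_list (map length (snd x))"

definition outputs_within :: "'s machine \<Rightarrow> nat \<times> bool list list \<Rightarrow> nat \<Rightarrow> bool list set \<Rightarrow> bool" where
  "outputs_within M x T R \<longleftrightarrow>
     (\<exists>t\<le>T. final M (config M x t) \<and> (\<exists>L. outputs M x t = encode L \<and> set L = R))"

definition poly_ceilings_to_roofs :: "'s machine \<Rightarrow> bool" where
  "poly_ceilings_to_roofs M \<longleftrightarrow> (\<exists>c d::nat. \<forall>n v L.
     canonical_linear n v \<and> distinct L \<and> set L = charvec n ` ceilings n v \<longrightarrow>
     outputs_within M (n, L) (c * (input_size (n, L) + 1) ^ d) (charvec n ` roofs n v))"

definition poly_roofs_to_ceilings :: "'s machine \<Rightarrow> bool" where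
  "poly_roofs_to_ceilings M \<longleftrightarrow> (\<exists>c d::nat. \<forall>n v L.
     canonical_linear n v \<and> distinct L \<and> set L = charvec n ` roofs n v \<longrightarrow>
     outputs_within M (n, L) (c * (input_size (n, L) + 1) ^ d) (charvec n ` ceilings n v))"

end

theory Submission
  imports Defs "HOL-Real_Asymp.Real_Asymp"
begin

text \<open>Compare coalitions of \<open>{1..n}\<close> by their prefix counts \<open>|S \<inter> {1..j}|\<close>: \<open>S\<close> dominates \<open>T\<close>
  if every prefix count of \<open>S\<close> is at least that of \<open>T\<close>. Supersets and left shifts move up in this
  order, so every dominance-monotone predicate defines a canonical linear game, in which a
  dominance-minimal winning coalition is a roof and a dominance-maximal losing one is a ceiling.
  Conversely, single covering steps show that everything strictly dominating a ceiling wins and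
  everything strictly dominated by a roof loses.

  Take \<open>n = 4 m\<close> and, for \<open>X \<subseteq> {0..<m}\<close>, the block coalition whose \<open>i\<close>-th block
  \<open>{4i+1, ..., 4i+4}\<close> contributes \<open>{4i+1, 4i+4}\<close> if \<open>i \<in> X\<close> and \<open>{4i+2, 4i+3}\<close> otherwise.
  In the game \<open>wins1\<close> all \<open>2^m\<close> block coalitions are roofs, while its losing coalitions form a
  union of \<open>2 m\<close> lower boxes in prefix counts; the pointwise maximum of the prefix counts of two
  ceilings in the same box is a losing coalition dominating both, so there are at most \<open>2 m\<close>
  ceilings. The game \<open>wins2\<close> plays the dual role. A machine emits at most one symbol per step,
  so it cannot write \<open>2^m\<close> coalitions in time polynomial in an input of size \<open>O(m\<^sup>2)\<close>.\<close>

primrec prefix_count :: "nat set \<Rightarrow> nat \<Rightarrow> nat" where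
  "prefix_count S 0 = 0"
| "prefix_count S (Suc j) = prefix_count S j + (if Suc j \<in> S then 1 else 0)"

definition dominates :: "nat set \<Rightarrow> nat set \<Rightarrow> bool" where
  "dominates S T \<longleftrightarrow> (\<forall>j. prefix_count T j \<le> prefix_count S j)"

definition strictly_dominates :: "nat set \<Rightarrow> nat set \<Rightarrow> bool" where
  "strictly_dominates S T \<longleftrightarrow> dominates S T \<and> (\<exists>j. prefix_count T j < prefix_count S j)"

definition dominance_monotone :: "(nat set \<Rightarrow> bool) \<Rightarrow> bool" where
  "dominance_monotone P \<longleftrightarrow> (\<forall>S T. dominates T S \<longrightarrow> P S \<longrightarrow> P T)"

definition game_of :: "nat \<Rightarrow> (nat set \<Rightarrow> bool) \<Rightarrow> nat set \<Rightarrow> bool" where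
  "game_of n P S \<longleftrightarrow> S \<subseteq> {1..n} \<and> P S"

lemma prefix_count_mono: "a \<le> b \<Longrightarrow> prefix_count S a \<le> prefix_count S b"
  by (induction b) (auto simp: le_Suc_eq)

lemma prefix_count_le_add: "a \<le> b \<Longrightarrow> prefix_count S b \<le> prefix_count S a + (b - a)"
  by (induction b) (auto simp: le_Suc_eq)

lemma prefix_count_interval_in:
  "a \<le> b \<Longrightarrow> (\<And>q. a < q \<Longrightarrow> q \<le> b \<Longrightarrow> q \<in> S) \<Longrightarrow> prefix_count S b = prefix_count S a + (b - a)"
  by (induction b) (auto simp: le_Suc_eq Suc_diff_le)

lemma prefix_count_interval_out:
  "a \<le> b \<Longrightarrow> (\<And>q. a < q \<Longrightarrow> q \<le> b \<Longrightarrow> q \<notin> S) \<Longrightarrow> prefix_count S b = prefix_count S a"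
  by (induction b) (auto simp: le_Suc_eq)

lemma prefix_count_beyond: "S \<subseteq> {1..n} \<Longrightarrow> n \<le> j \<Longrightarrow> prefix_count S j = prefix_count S n"
  by (rule prefix_count_interval_out) auto

lemma prefix_count_subset: "S \<subseteq> T \<Longrightarrow> prefix_count S j \<le> prefix_count T j"
  by (induction j) auto

lemma prefix_count_insert:
  "0 < i \<Longrightarrow> i \<notin> S \<Longrightarrow> prefix_count (insert i S) p = prefix_count S p + (if i \<le> p then 1 else 0)"
  by (induction p) (auto simp: le_Suc_eq)

lemma prefix_count_remove:
  "0 < i \<Longrightarrow> i \<in> S \<Longrightarrow> prefix_count (S - {i}) p + (if i \<le> p then 1 else 0) = prefix_count S p"
  by (induction p) (auto simp: le_Suc_eq)

lemma prefix_count_left_shift: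
  "2 \<le> m \<Longrightarrow> m \<in> S \<Longrightarrow> m - 1 \<notin> S \<Longrightarrow>
   prefix_count (S - {m} \<union> {m - 1}) p = prefix_count S p + (if p = m - 1 then 1 else 0)"
  by (induction p) (auto simp: le_Suc_eq)

lemma prefix_count_right_shift:
  "1 \<le> m \<Longrightarrow> m \<in> S \<Longrightarrow> m + 1 \<notin> S \<Longrightarrow>
   prefix_count (S - {m} \<union> {m + 1}) p + (if p = m then 1 else 0) = prefix_count S p"
  by (induction p) (auto simp: le_Suc_eq split: if_splits)

lemma prefix_count_eqI:
  assumes "0 \<notin> S" "0 \<notin> T" "\<And>j. prefix_count S j = prefix_count T j"
  shows "S = T"
proof -
  have "Suc k \<in> S \<longleftrightarrow> Suc k \<in> T" for k
    using assms(3)[of k] assms(3)[of "Suc k"] by (auto split: if_splits)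
  then show ?thesis using assms(1,2) by (metis not0_implies_Suc set_eqI)
qed

lemma exists_set_with_prefix_count:
  fixes f :: "nat \<Rightarrow> nat"
  assumes "f 0 = 0" "\<And>j. f j \<le> f (Suc j)" "\<And>j. f (Suc j) \<le> Suc (f j)"
    and "\<And>j. n \<le> j \<Longrightarrow> f (Suc j) = f j"
  shows "\<exists>J \<subseteq> {1..n}. \<forall>j. prefix_count J j = f j"
proof (intro exI conjI allI)
  let ?J = "{Suc i |i. f i < f (Suc i)}"
  show "prefix_count ?J j = f j" for j
  proof (induction j)
    case (Suc j)
    have "Suc j \<in> ?J \<longleftrightarrow> f j < f (Suc j)" by auto
    with Suc assms(2,3)[of j] show ?case by simp
  qed (simp add: assms(1))
  show "?J \<subseteq> {1..n}"
  proof
    fix x assume "x \<in> ?J"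
    then obtain i where "x = Suc i" "f i < f (Suc i)" by blast
    with assms(4)[of i] show "x \<in> {1..n}" by (cases "n \<le> i") auto
  qed
qed

lemma exists_prefix_count_max:
  assumes "S \<subseteq> {1..n}" "S' \<subseteq> {1..n}"
  shows "\<exists>J \<subseteq> {1..n}. \<forall>j. prefix_count J j = max (prefix_count S j) (prefix_count S' j)"
  using assms by (intro exists_set_with_prefix_count) (auto intro: max.mono prefix_count_mono)

lemma exists_prefix_count_min:
  assumes "S \<subseteq> {1..n}" "S' \<subseteq> {1..n}"
  shows "\<exists>J \<subseteq> {1..n}. \<forall>j. prefix_count J j = min (prefix_count S j) (prefix_count S' j)"
  using assms by (intro exists_set_with_prefix_count) (auto intro: min.mono prefix_count_mono)

lemma dominates_if_subset: "T \<subseteq> S \<Longrightarrow> dominates S T"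
  unfolding dominates_def by (simp add: prefix_count_subset)

lemma dominates_antisym:
  assumes "dominates S T" "dominates T S" "S \<subseteq> {1..n}" "T \<subseteq> {1..n}"
  shows "S = T"
proof (rule prefix_count_eqI)
  show "0 \<notin> S" "0 \<notin> T" using assms(3,4) by auto
  show "prefix_count S j = prefix_count T j" for j
    using assms(1,2) unfolding dominates_def by (meson antisym)
qed

lemma strictly_dominates_trans:
  "strictly_dominates S T \<Longrightarrow> strictly_dominates T U \<Longrightarrow> strictly_dominates S U"
  unfolding strictly_dominates_def dominates_def by (meson le_less_trans le_trans)

lemma strictly_dominates_neq: "strictly_dominates S T \<Longrightarrow> S \<noteq> T"
  unfolding strictly_dominates_def by auto

lemma direct_left_shift_strictly_dominates:
  assumes "direct_left_shift n S S'" "S \<subseteq> {1..n}"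
  shows "strictly_dominates S' S \<and> S' \<subseteq> {1..n}"
proof -
  obtain m where m: "m \<in> S" "2 \<le> m" "m \<le> n" "m - 1 \<notin> S" "S' = S - {m} \<union> {m - 1}"
    using assms(1) unfolding direct_left_shift_def by blast
  then have "prefix_count S' p = prefix_count S p + (if p = m - 1 then 1 else 0)" for p
    using prefix_count_left_shift by simp
  then show ?thesis
    using m assms(2) unfolding strictly_dominates_def dominates_def
    by (auto intro!: exI[of _ "m - 1"])
qed

lemma direct_right_shift_strictly_dominated:
  assumes "direct_right_shift n S S'" "S \<subseteq> {1..n}"
  shows "strictly_dominates S S' \<and> S' \<subseteq> {1..n}"
proof -
  obtain m where m: "m \<in> S" "1 \<le> m" "m + 1 \<le> n" "m + 1 \<notin> S" "S' = S - {m} \<union> {m + 1}"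
    using assms(1) unfolding direct_right_shift_def by blast
  then have shift: "prefix_count S' p + (if p = m then 1 else 0) = prefix_count S p" for p
    using prefix_count_right_shift by simp
  have "prefix_count S' p \<le> prefix_count S p" for p
    using shift[of p] by (metis le_add1)
  moreover have "prefix_count S' m < prefix_count S m"
    using shift[of m] by simp
  ultimately show ?thesis
    using m assms(2) unfolding strictly_dominates_def dominates_def by auto
qed

lemma left_shift_strictly_dominates:
  assumes "left_shift n S S'" "S \<subseteq> {1..n}"
  shows "strictly_dominates S' S \<and> S' \<subseteq> {1..n}"
  using assms(1)[unfolded left_shift_def] assms(2)
  by (induction rule: tranclp_induct)
    (use direct_left_shift_strictly_dominates strictly_dominates_trans in blast)+

lemma right_shift_strictly_dominated:
  assumes "right_shift n S S'" "S \<subseteq> {1..n}"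
  shows "strictly_dominates S S' \<and> S' \<subseteq> {1..n}"
  using assms(1)[unfolded right_shift_def] assms(2)
  by (induction rule: tranclp_induct)
    (use direct_right_shift_strictly_dominated strictly_dominates_trans in blast)+

lemma first_prefix_difference:
  assumes "S \<subseteq> {1..n}" "T \<subseteq> {1..n}" "dominates T S" "T \<noteq> S"
  obtains i where "prefix_count S i = prefix_count T i" "Suc i \<in> T" "Suc i \<notin> S" "Suc i \<le> n"
proof -
  have "\<exists>j. prefix_count S j < prefix_count T j"
    using assms dominates_antisym unfolding dominates_def by (meson not_le)
  then obtain j where j: "prefix_count S j < prefix_count T j"
    and first: "\<And>k. k < j \<Longrightarrow> prefix_count T k \<le> prefix_count S k"
    using exists_least_iff[of "\<lambda>j. prefix_count S j < prefix_count T j"] by (auto simp: not_less)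
  then obtain i where i: "j = Suc i" by (cases j) auto
  with first[of i] assms(3) have "prefix_count S i = prefix_count T i"
    unfolding dominates_def by (simp add: antisym)
  moreover from this j i have "Suc i \<in> T" "Suc i \<notin> S" by (auto split: if_splits)
  ultimately show thesis using that assms(2) by auto
qed

lemma dominance_step_up:
  assumes S: "S \<subseteq> {1..n}" and T: "T \<subseteq> {1..n}" and d: "dominates T S" "T \<noteq> S"
  obtains S' where "S \<subset> S' \<and> S' \<subseteq> {1..n} \<or> direct_left_shift n S S'" "dominates T S'"
proof -
  obtain i where eq: "prefix_count S i = prefix_count T i"
    and i: "Suc i \<in> T" "Suc i \<notin> S" "Suc i \<le> n"
    using first_prefix_difference[OF S T d] .
  have gain: "prefix_count S (Suc i) < prefix_count T p" if "Suc i \<le> p" for p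
    using prefix_count_mono[OF that, of T] eq i by simp
  show thesis
  proof (cases "\<exists>m\<in>S. Suc i < m")
    case True
    then obtain m where m: "m \<in> S" "Suc i < m" and gap: "\<And>q. Suc i < q \<Longrightarrow> q < m \<Longrightarrow> q \<notin> S"
      using exists_least_iff[of "\<lambda>m. m \<in> S \<and> Suc i < m"] by blast
    let ?S' = "S - {m} \<union> {m - 1}"
    have "m - 1 \<notin> S" using gap i m by (cases "m - 1 = Suc i") auto
    then have shift: "direct_left_shift n S ?S'"
      using m S unfolding direct_left_shift_def by (auto intro!: bexI[of _ m])
    have count: "prefix_count ?S' p = prefix_count S p + (if p = m - 1 then 1 else 0)" for p
      using m \<open>m - 1 \<notin> S\<close> by (intro prefix_count_left_shift) auto
    have "prefix_count S (m - 1) = prefix_count S (Suc i)"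
      using gap m by (intro prefix_count_interval_out) auto
    with gain[of "m - 1"] m have "prefix_count S (m - 1) < prefix_count T (m - 1)" by simp
    with d(1) have "dominates T ?S'" unfolding dominates_def count by auto
    with shift show thesis using that by blast
  next
    case False
    let ?S' = "insert (Suc i) S"
    have "prefix_count S p = prefix_count S (Suc i)" if "Suc i \<le> p" for p
      using False that by (intro prefix_count_interval_out) auto
    with gain d(1) have "dominates T ?S'"
      unfolding dominates_def using prefix_count_insert[OF _ i(2)] by (simp add: Suc_le_eq)
    moreover have "S \<subset> ?S' \<and> ?S' \<subseteq> {1..n}" using i S by auto
    ultimately show thesis using that by blast
  qed
qed

lemma dominance_step_down:
  assumes S: "S \<subseteq> {1..n}" and R: "R \<subseteq> {1..n}" and d: "dominates S R" "S \<noteq> R"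
  obtains S' where "S' \<subset> S \<or> direct_right_shift n S S'" "dominates S' R"
proof -
  obtain i where eq: "prefix_count R i = prefix_count S i"
    and i: "Suc i \<in> S" "Suc i \<notin> R" "Suc i \<le> n"
    using first_prefix_difference[OF R S d] .
  have "\<exists>p. Suc i < p \<and> p \<notin> S" using S i by (intro exI[of _ "Suc n"]) auto
  then obtain p where p: "Suc i < p" "p \<notin> S" and run: "\<And>q. Suc i < q \<Longrightarrow> q < p \<Longrightarrow> q \<in> S"
    using exists_least_iff[of "\<lambda>p. Suc i < p \<and> p \<notin> S"] by blast
  have "p \<le> Suc n" by (rule ccontr) (use run[of "Suc n"] i S in auto)
  have "q \<in> S" if "i < q" "q < p" for q
    using run[of q] i(1) that by (cases "q = Suc i") auto
  then have "prefix_count S (p - 1) = prefix_count S i + (p - 1 - i)"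
    using p by (intro prefix_count_interval_in) auto
  moreover have "prefix_count R (p - 1) \<le> prefix_count R (Suc i) + (p - 1 - Suc i)"
    using p by (intro prefix_count_le_add) simp
  ultimately have gap: "prefix_count R (p - 1) < prefix_count S (p - 1)"
    using eq i p by simp
  show thesis
  proof (cases "p \<le> n")
    case True
    let ?m = "p - 1"
    let ?S' = "S - {?m} \<union> {?m + 1}"
    have m: "?m \<in> S" "1 \<le> ?m" "?m + 1 \<le> n" "?m + 1 \<notin> S"
      using run[of ?m] i p True by (cases "?m = Suc i", auto)
    then have "direct_right_shift n S ?S'"
      unfolding direct_right_shift_def by auto
    moreover have "prefix_count R q \<le> prefix_count ?S' q" for q
      using prefix_count_right_shift[OF m(2,1,4), of q] gap
        d(1)[unfolded dominates_def, rule_format, of q]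
      by (cases "q = ?m") auto
    then have "dominates ?S' R" unfolding dominates_def by blast
    ultimately show thesis using that by blast
  next
    case False
    with \<open>p \<le> Suc n\<close> have "p = Suc n" by simp
    have n: "n \<in> S" "0 < n" using run[of n] i \<open>p = Suc n\<close> by (cases "n = Suc i", auto)
    have below: "prefix_count R q < prefix_count S q" if "n \<le> q" for q
      using gap \<open>p = Suc n\<close> prefix_count_beyond[OF S that] prefix_count_beyond[OF R that] by simp
    have "prefix_count R q \<le> prefix_count (S - {n}) q" for q
      using prefix_count_remove[OF n(2,1), of q] below[of q]
        d(1)[unfolded dominates_def, rule_format, of q]
      by (cases "n \<le> q") auto
    then have "dominates (S - {n}) R" unfolding dominates_def by blast
    moreover have "S - {n} \<subset> S" using n by auto
    ultimately show thesis using that by blast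
  qed
qed

lemma canonical_linear_game_of:
  assumes "dominance_monotone P"
  shows "canonical_linear n (game_of n P)"
  unfolding canonical_linear_def
proof (intro conjI allI impI)
  show "monotonic_game n (game_of n P)"
    using assms dominates_if_subset unfolding monotonic_game_def game_of_def dominance_monotone_def
    by blast
  fix i j assume ij: "1 \<le> i \<and> i \<le> j \<and> j \<le> n"
  show "desirable n (game_of n P) i j"
    unfolding desirable_def game_of_def
  proof (intro allI impI)
    fix S assume S: "S \<subseteq> {1..n} - {i, j}" and win: "S \<union> {j} \<subseteq> {1..n} \<and> P (S \<union> {j})"
    have "i \<notin> S" "j \<notin> S" using S by auto
    then have "prefix_count (insert j S) p \<le> prefix_count (insert i S) p" for p
      using prefix_count_insert[of i S p] prefix_count_insert[of j S p] ij by auto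
    then have "dominates (insert i S) (insert j S)" unfolding dominates_def by blast
    with win show "S \<union> {i} \<subseteq> {1..n} \<and> P (S \<union> {i})" using ij S assms
      unfolding dominance_monotone_def by auto
  qed
qed

lemma roofs_subset_Pow: "roofs n v \<subseteq> Pow {1..n}"
  by (auto simp: roofs_def minimal_winning_def)

lemma ceilings_subset_Pow: "ceilings n v \<subseteq> Pow {1..n}"
  by (auto simp: ceilings_def maximal_losing_def)

lemma roof_if_dominance_minimal:
  assumes S: "S \<subseteq> {1..n}" "P S"
    and minimal: "\<And>T. T \<subseteq> {1..n} \<Longrightarrow> dominates S T \<Longrightarrow> P T \<Longrightarrow> dominates T S"
  shows "S \<in> roofs n (game_of n P)"
proof -
  have loses: "\<not> game_of n P T" if "dominates S T" "T \<noteq> S" for T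
    using that minimal dominates_antisym[OF that(1) _ S(1)] unfolding game_of_def by blast
  have "\<not> game_of n P T" if "T \<subset> S" for T
    using that loses dominates_if_subset by blast
  moreover have "\<not> game_of n P T" if "right_shift n S T" for T
    using right_shift_strictly_dominated[OF that S(1)] loses strictly_dominates_neq
    unfolding strictly_dominates_def by blast
  ultimately show ?thesis
    using S unfolding roofs_def minimal_winning_def game_of_def by blast
qed

lemma ceiling_if_dominance_maximal:
  assumes S: "S \<subseteq> {1..n}" "\<not> P S"
    and maximal: "\<And>T. T \<subseteq> {1..n} \<Longrightarrow> dominates T S \<Longrightarrow> \<not> P T \<Longrightarrow> dominates S T"
  shows "S \<in> ceilings n (game_of n P)"
proof -
  have wins: "game_of n P T" if "T \<subseteq> {1..n}" "dominates T S" "T \<noteq> S" for T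
    using that maximal dominates_antisym[OF that(2) _ that(1) S(1)] unfolding game_of_def by blast
  have "game_of n P T" if "S \<subset> T" "T \<subseteq> {1..n}" for T
    using that wins dominates_if_subset by blast
  moreover have "game_of n P T" if "left_shift n S T" for T
    using left_shift_strictly_dominates[OF that S(1)] wins strictly_dominates_neq
    unfolding strictly_dominates_def by blast
  ultimately show ?thesis
    using S unfolding ceilings_def maximal_losing_def game_of_def by blast
qed

lemma wins_if_dominates_ceiling:
  assumes P: "dominance_monotone P"
    and S: "S \<in> ceilings n (game_of n P)" and T: "T \<subseteq> {1..n}" "dominates T S" "T \<noteq> S"
  shows "P T"
proof -
  have "S \<subseteq> {1..n}" using S ceilings_subset_Pow by blast
  then obtain S' where S': "S \<subset> S' \<and> S' \<subseteq> {1..n} \<or> direct_left_shift n S S'" "dominates T S'"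
    using dominance_step_up T by metis
  have "game_of n P S'"
    using S'(1) S unfolding ceilings_def maximal_losing_def left_shift_def by blast
  with S'(2) show ?thesis using P unfolding game_of_def dominance_monotone_def by blast
qed

lemma loses_if_dominated_by_roof:
  assumes P: "dominance_monotone P"
    and S: "S \<in> roofs n (game_of n P)" and T: "T \<subseteq> {1..n}" "dominates S T" "T \<noteq> S"
  shows "\<not> P T"
proof
  assume "P T"
  have S_sub: "S \<subseteq> {1..n}" using S roofs_subset_Pow by blast
  then obtain S' where S': "S' \<subset> S \<or> direct_right_shift n S S'" "dominates S' T"
    using dominance_step_down T by metis
  then have "S' \<subseteq> {1..n}"
    using S_sub direct_right_shift_strictly_dominated by blast
  moreover have "\<not> game_of n P S'"
    using S'(1) S unfolding roofs_def minimal_winning_def right_shift_def by blast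
  ultimately show False
    using P S'(2) \<open>P T\<close> unfolding game_of_def dominance_monotone_def by blast
qed

lemma card_ceilings_le:
  assumes P: "dominance_monotone P" and "finite C"
    and losing: "\<And>S. S \<subseteq> {1..n} \<Longrightarrow> \<not> P S \<longleftrightarrow> (\<exists>c\<in>C. \<forall>(j, k)\<in>B c. prefix_count S j < k)"
  shows "card (ceilings n (game_of n P)) \<le> card C"
proof (rule card_le_if_inj_on_rel[where r = "\<lambda>S c. \<forall>(j, k)\<in>B c. prefix_count S j < k"])
  show "finite C" by fact
  fix S assume "S \<in> ceilings n (game_of n P)"
  then have "S \<subseteq> {1..n}" "\<not> P S"
    unfolding ceilings_def maximal_losing_def game_of_def by auto
  with losing[OF this(1)] show "\<exists>c. c \<in> C \<and> (\<forall>(j, k)\<in>B c. prefix_count S j < k)"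
    by blast
next
  fix S S' c
  assume S: "S \<in> ceilings n (game_of n P)" "S' \<in> ceilings n (game_of n P)" and "c \<in> C"
    and box: "\<forall>(j, k)\<in>B c. prefix_count S j < k" "\<forall>(j, k)\<in>B c. prefix_count S' j < k"
  have "S \<subseteq> {1..n}" "S' \<subseteq> {1..n}" using S ceilings_subset_Pow by blast+
  from exists_prefix_count_max[OF this] obtain J
    where J: "J \<subseteq> {1..n}" "\<And>j. prefix_count J j = max (prefix_count S j) (prefix_count S' j)"
    by blast
  have "\<forall>(j, k)\<in>B c. prefix_count J j < k" using box unfolding J(2) by auto
  then have "\<not> P J" using losing[OF J(1)] \<open>c \<in> C\<close> by blast
  moreover have "dominates J S" "dominates J S'" unfolding dominates_def J(2) by auto
  ultimately show "S = S'"
    using wins_if_dominates_ceiling[OF P S(1) J(1)]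
      wins_if_dominates_ceiling[OF P S(2) J(1)] by auto
qed

lemma card_roofs_le:
  assumes P: "dominance_monotone P" and "finite C"
    and winning: "\<And>S. S \<subseteq> {1..n} \<Longrightarrow> P S \<longleftrightarrow> (\<exists>c\<in>C. \<forall>(j, k)\<in>B c. k \<le> prefix_count S j)"
  shows "card (roofs n (game_of n P)) \<le> card C"
proof (rule card_le_if_inj_on_rel[where r = "\<lambda>S c. \<forall>(j, k)\<in>B c. k \<le> prefix_count S j"])
  show "finite C" by fact
  fix S assume "S \<in> roofs n (game_of n P)"
  then have "S \<subseteq> {1..n}" "P S"
    unfolding roofs_def minimal_winning_def game_of_def by auto
  with winning[OF this(1)] show "\<exists>c. c \<in> C \<and> (\<forall>(j, k)\<in>B c. k \<le> prefix_count S j)"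
    by blast
next
  fix S S' c
  assume S: "S \<in> roofs n (game_of n P)" "S' \<in> roofs n (game_of n P)" and "c \<in> C"
    and box: "\<forall>(j, k)\<in>B c. k \<le> prefix_count S j" "\<forall>(j, k)\<in>B c. k \<le> prefix_count S' j"
  have "S \<subseteq> {1..n}" "S' \<subseteq> {1..n}" using S roofs_subset_Pow by blast+
  from exists_prefix_count_min[OF this] obtain J
    where J: "J \<subseteq> {1..n}" "\<And>j. prefix_count J j = min (prefix_count S j) (prefix_count S' j)"
    by blast
  have "\<forall>(j, k)\<in>B c. k \<le> prefix_count J j" using box unfolding J(2) by auto
  then have "P J" using winning[OF J(1)] \<open>c \<in> C\<close> by blast
  moreover have "dominates S J" "dominates S' J" unfolding dominates_def J(2) by auto
  ultimately show "S = S'"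
    using loses_if_dominated_by_roof[OF P S(1) J(1)]
      loses_if_dominated_by_roof[OF P S(2) J(1)] by auto
qed

definition block_coalition :: "nat \<Rightarrow> nat set \<Rightarrow> nat set" where
  "block_coalition m X =
     {4*i + b |i b. i < m \<and> (if i \<in> X then b = 1 \<or> b = 4 else b = 2 \<or> b = 3)}"

definition block_offset :: "bool \<Rightarrow> nat \<Rightarrow> nat" where
  "block_offset x r =
     (if x then (if r = 0 then 0 else if r \<le> 3 then 1 else 2)
      else (if r \<le> 1 then 0 else if r = 2 then 1 else 2))"

lemma block_coalition_subset: "block_coalition m X \<subseteq> {1..4*m}"
  unfolding block_coalition_def by (auto split: if_splits)

lemma mem_block_coalition:
  assumes "i < m" "1 \<le> b" "b \<le> 4"
  shows "4*i + b \<in> block_coalition m X \<longleftrightarrow> (if i \<in> X then b = 1 \<or> b = 4 else b = 2 \<or> b = 3)"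
proof
  assume "4*i + b \<in> block_coalition m X"
  then obtain k c where k: "4*i + b = 4*k + c" "if k \<in> X then c = 1 \<or> c = 4 else c = 2 \<or> c = 3"
    unfolding block_coalition_def by blast
  then have "1 \<le> c" "c \<le> 4" by (auto split: if_splits)
  with k(1) assms(2,3) have "k = i \<and> c = b" by presburger
  with k(2) show "if i \<in> X then b = 1 \<or> b = 4 else b = 2 \<or> b = 3" by (auto split: if_splits)
next
  assume "if i \<in> X then b = 1 \<or> b = 4 else b = 2 \<or> b = 3"
  then show "4*i + b \<in> block_coalition m X" unfolding block_coalition_def using assms(1) by blast
qed

lemma prefix_count_block_coalition_within:
  assumes "i < m" "prefix_count (block_coalition m X) (4*i) = 2*i" "r \<le> 4"
  shows "prefix_count (block_coalition m X) (4*i + r) = 2*i + block_offset (i \<in> X) r"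
  using assms(3)
proof (induction r)
  case (Suc r)
  then have "Suc (4*i + r) \<in> block_coalition m X \<longleftrightarrow>
      (if i \<in> X then Suc r = 1 \<or> Suc r = 4 else Suc r = 2 \<or> Suc r = 3)"
    using mem_block_coalition[OF assms(1), of "Suc r" X] by simp
  with Suc show ?case by (auto simp: block_offset_def)
qed (simp add: assms(2) block_offset_def)

lemma prefix_count_block_coalition_start:
  "i \<le> m \<Longrightarrow> prefix_count (block_coalition m X) (4*i) = 2*i"
proof (induction i)
  case (Suc i)
  then have "prefix_count (block_coalition m X) (4*i + 4) = 2*i + block_offset (i \<in> X) 4"
    by (intro prefix_count_block_coalition_within) auto
  then show ?case by (simp add: block_offset_def add.commute)
qed simp

lemma prefix_count_block_coalition:
  "i < m \<Longrightarrow> r \<le> 4 \<Longrightarrow>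
   prefix_count (block_coalition m X) (4*i + r) = 2*i + block_offset (i \<in> X) r"
  by (simp add: prefix_count_block_coalition_within prefix_count_block_coalition_start)

lemma prefix_count_block_coalition_beyond:
  "4*m \<le> j \<Longrightarrow> prefix_count (block_coalition m X) j = 2*m"
  using prefix_count_beyond[OF block_coalition_subset] prefix_count_block_coalition_start by simp

lemma block_cases:
  fixes j m :: nat
  obtains (block) i r where "i < m" "r < 4" "j = 4*i + r" | (beyond) "4*m \<le> j"
  by (metis div_mult_mod_eq mod_less_divisor mult.commute not_le zero_less_numeral
      less_mult_imp_div_less)

lemma two_power_le_card_if_block_coalitions:
  assumes "finite F" "\<And>X. block_coalition m X \<in> F"
  shows "2^m \<le> card F"
proof -
  have "inj_on (block_coalition m) (Pow {..<m})"
  proof (rule inj_onI)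
    fix X Y assume "X \<in> Pow {..<m}" "Y \<in> Pow {..<m}" "block_coalition m X = block_coalition m Y"
    moreover have "4*i + 1 \<in> block_coalition m Z \<longleftrightarrow> i \<in> Z" if "i < m" for i Z
      using mem_block_coalition[OF that, of 1 Z] by simp
    ultimately show "X = Y" by blast
  qed
  then have "card (block_coalition m ` Pow {..<m}) = 2^m"
    by (simp add: card_image card_Pow)
  moreover have "block_coalition m ` Pow {..<m} \<subseteq> F" using assms(2) by blast
  ultimately show ?thesis using assms(1) card_mono by metis
qed

definition wins1 :: "nat \<Rightarrow> nat set \<Rightarrow> bool" where
  "wins1 m S \<longleftrightarrow> (\<forall>i<m. 2*i + 2 \<le> prefix_count S (4*i + 4) \<and>
     (2*i + 1 \<le> prefix_count S (4*i + 1) \<or> 2*i + 2 \<le> prefix_count S (4*i + 3)))"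

lemma dominance_monotone_wins1: "dominance_monotone (wins1 m)"
  unfolding dominance_monotone_def wins1_def dominates_def by (meson le_trans)

lemma wins1_block_coalition: "wins1 m (block_coalition m X)"
  unfolding wins1_def
proof (intro allI impI)
  fix i assume "i < m"
  from prefix_count_block_coalition[OF this, of 1 X] prefix_count_block_coalition[OF this, of 3 X]
    prefix_count_block_coalition[OF this, of 4 X]
  show "2*i + 2 \<le> prefix_count (block_coalition m X) (4*i + 4) \<and>
    (2*i + 1 \<le> prefix_count (block_coalition m X) (4*i + 1) \<or>
     2*i + 2 \<le> prefix_count (block_coalition m X) (4*i + 3))"
    by (simp add: block_offset_def)
qed

lemma wins1_prefix_count_ge: "wins1 m T \<Longrightarrow> i \<le> m \<Longrightarrow> 2*i \<le> prefix_count T (4*i)"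
  unfolding wins1_def by (cases i) (auto simp: add.commute)

lemma wins1_block_lower_bound:
  assumes win: "wins1 m T" and below: "dominates (block_coalition m X) T" and "i < m" "r < 4"
  shows "prefix_count (block_coalition m X) (4*i + r) \<le> prefix_count T (4*i + r)"
proof -
  have upper: "prefix_count T (4*i + r') \<le> 2*i + block_offset (i \<in> X) r'" if "r' \<le> 4" for r'
    using below prefix_count_block_coalition[OF assms(3) that] unfolding dominates_def by metis
  have low: "2*i \<le> prefix_count T (4*i)"
    using wins1_prefix_count_ge[OF win] assms(3) by simp
  have win_i: "2*i + 1 \<le> prefix_count T (4*i + 1) \<or> 2*i + 2 \<le> prefix_count T (4*i + 3)"
    using win assms(3) unfolding wins1_def by blast
  have mono: "prefix_count T (4*i + r') \<le> prefix_count T (4*i + r'')" if "r' \<le> r''" for r' r''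
    using that by (intro prefix_count_mono) simp
  have step: "prefix_count T (4*i + 3) \<le> prefix_count T (4*i + 2) + 1"
    by (simp add: numeral_eq_Suc)
  have "2*i + block_offset (i \<in> X) r \<le> prefix_count T (4*i + r)"
  proof (cases "i \<in> X")
    case True
    with upper[of 3] win_i have "2*i + 1 \<le> prefix_count T (4*i + 1)"
      by (simp add: block_offset_def)
    with True low mono[of 1 r] assms(4) show ?thesis
      by (auto simp: block_offset_def simp del: prefix_count.simps)
  next
    case False
    with upper[of 1] win_i have three: "2*i + 2 \<le> prefix_count T (4*i + 3)"
      by (simp add: block_offset_def)
    consider "r \<le> 1" | "r = 2" | "r = 3" using assms(4) by linarith
    then show ?thesis
    proof cases
      case 1
      with False low mono[of 0 r] show ?thesis by (simp add: block_offset_def)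
    next
      case 2
      with False three step show ?thesis by (simp add: block_offset_def)
    next
      case 3
      with False three show ?thesis by (simp add: block_offset_def)
    qed
  qed
  then show ?thesis using assms(3,4) prefix_count_block_coalition[of i m r X] by simp
qed

lemma block_coalition_minimal_wins1:
  assumes win: "wins1 m T" and below: "dominates (block_coalition m X) T"
  shows "dominates T (block_coalition m X)"
  unfolding dominates_def
proof
  fix j
  show "prefix_count (block_coalition m X) j \<le> prefix_count T j"
  proof (cases rule: block_cases[where j = j and m = m])
    case (block i r)
    then show ?thesis using wins1_block_lower_bound[OF win below] by simp
  next
    case beyond
    have "2*m \<le> prefix_count T (4*m)" using wins1_prefix_count_ge[OF win] by simp
    also have "\<dots> \<le> prefix_count T j" using beyond by (rule prefix_count_mono)
    finally show ?thesis using prefix_count_block_coalition_beyond[OF beyond] by simp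
  qed
qed

lemma card_roofs_wins1: "2^m \<le> card (roofs (4*m) (game_of (4*m) (wins1 m)))"
proof (rule two_power_le_card_if_block_coalitions)
  show "finite (roofs (4*m) (game_of (4*m) (wins1 m)))"
    by (rule finite_subset[OF roofs_subset_Pow]) simp
  show "block_coalition m X \<in> roofs (4*m) (game_of (4*m) (wins1 m))" for X
    using block_coalition_subset wins1_block_coalition block_coalition_minimal_wins1
    by (rule roof_if_dominance_minimal)
qed

lemma card_ceilings_wins1: "card (ceilings (4*m) (game_of (4*m) (wins1 m))) \<le> 2*m"
proof -
  define B :: "nat \<times> bool \<Rightarrow> (nat \<times> nat) set" where
    "B = (\<lambda>(i, b). if b then {(4*i + 1, 2*i + 1), (4*i + 3, 2*i + 2)} else {(4*i + 4, 2*i + 2)})"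
  have "card (ceilings (4*m) (game_of (4*m) (wins1 m))) \<le> card ({..<m} \<times> (UNIV :: bool set))"
  proof (rule card_ceilings_le[OF dominance_monotone_wins1, where B = B])
    fix S
    show "\<not> wins1 m S \<longleftrightarrow> (\<exists>c\<in>{..<m} \<times> UNIV. \<forall>(j, k)\<in>B c. prefix_count S j < k)"
    proof
      assume "\<not> wins1 m S"
      then obtain i where "i < m" "prefix_count S (4*i + 4) < 2*i + 2 \<or>
          prefix_count S (4*i + 1) < 2*i + 1 \<and> prefix_count S (4*i + 3) < 2*i + 2"
        unfolding wins1_def by (auto simp del: prefix_count.simps)
      then show "\<exists>c\<in>{..<m} \<times> UNIV. \<forall>(j, k)\<in>B c. prefix_count S j < k"
        by (intro bexI[of _ "(i, 2*i + 2 \<le> prefix_count S (4*i + 4))"]) (auto simp: B_def)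
    next
      assume "\<exists>c\<in>{..<m} \<times> UNIV. \<forall>(j, k)\<in>B c. prefix_count S j < k"
      then obtain i b where "i < m" "\<forall>(j, k)\<in>B (i, b). prefix_count S j < k" by blast
      then show "\<not> wins1 m S"
        unfolding wins1_def B_def by (cases b) (auto simp del: prefix_count.simps)
    qed
  qed simp
  then show ?thesis by simp
qed

definition wins2 :: "nat \<Rightarrow> nat set \<Rightarrow> bool" where
  "wins2 m S \<longleftrightarrow> (\<exists>i<m. 2*i + 3 \<le> prefix_count S (4*i + 4) \<or>
     (2*i + 1 \<le> prefix_count S (4*i + 1) \<and> 2*i + 2 \<le> prefix_count S (4*i + 3)))"

lemma dominance_monotone_wins2: "dominance_monotone (wins2 m)"
  unfolding dominance_monotone_def wins2_def dominates_def by (meson le_trans)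

lemma not_wins2_block_coalition: "\<not> wins2 m (block_coalition m X)"
  unfolding wins2_def
proof clarify
  fix i assume "i < m"
  from prefix_count_block_coalition[OF this, of 1 X] prefix_count_block_coalition[OF this, of 3 X]
    prefix_count_block_coalition[OF this, of 4 X]
  show "2*i + 3 \<le> prefix_count (block_coalition m X) (4*i + 4) \<or>
    (2*i + 1 \<le> prefix_count (block_coalition m X) (4*i + 1) \<and>
     2*i + 2 \<le> prefix_count (block_coalition m X) (4*i + 3)) \<Longrightarrow> False"
    by (simp add: block_offset_def split: if_splits)
qed

lemma not_wins2_prefix_count_le:
  assumes "\<not> wins2 m T" "i \<le> m"
  shows "prefix_count T (4*i) \<le> 2*i"
proof (cases i)
  case (Suc k)
  with assms have "\<not> 2*k + 3 \<le> prefix_count T (4*k + 4)"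
    unfolding wins2_def by (auto simp del: prefix_count.simps)
  with Suc show ?thesis by (simp add: add.commute del: prefix_count.simps)
qed simp

lemma not_wins2_block_upper_bound:
  assumes lose: "\<not> wins2 m T" and above: "dominates T (block_coalition m X)" and "i < m" "r < 4"
  shows "prefix_count T (4*i + r) \<le> prefix_count (block_coalition m X) (4*i + r)"
proof -
  have lower: "2*i + block_offset (i \<in> X) r' \<le> prefix_count T (4*i + r')" if "r' \<le> 4" for r'
    using above prefix_count_block_coalition[OF assms(3) that] unfolding dominates_def by metis
  have high: "prefix_count T (4*i) \<le> 2*i"
    using not_wins2_prefix_count_le[OF lose] assms(3) by simp
  have lose_i: "prefix_count T (4*i + 4) \<le> 2*i + 2"
    "prefix_count T (4*i + 1) \<le> 2*i \<or> prefix_count T (4*i + 3) \<le> 2*i + 1"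
    using lose assms(3) unfolding wins2_def by auto
  have mono: "prefix_count T (4*i + r') \<le> prefix_count T (4*i + r'')" if "r' \<le> r''" for r' r''
    using that by (intro prefix_count_mono) simp
  have step: "prefix_count T (4*i + 2) \<le> prefix_count T (4*i + 1) + 1"
    by (simp add: numeral_eq_Suc)
  have "prefix_count T (4*i + r) \<le> 2*i + block_offset (i \<in> X) r"
  proof (cases "i \<in> X")
    case True
    with lower[of 1] lose_i(2) have three: "prefix_count T (4*i + 3) \<le> 2*i + 1"
      by (simp add: block_offset_def)
    consider "r = 0" | "1 \<le> r" using assms(4) by linarith
    then show ?thesis
    proof cases
      case 1
      with high show ?thesis by (simp add: block_offset_def)
    next
      case 2
      with True three mono[of r 3] assms(4) show ?thesis by (simp add: block_offset_def)
    qed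
  next
    case False
    with lower[of 3] lose_i(2) have one: "prefix_count T (4*i + 1) \<le> 2*i"
      by (simp add: block_offset_def)
    consider "r = 0" | "r = 1" | "r = 2" | "r = 3" using assms(4) by linarith
    then show ?thesis
    proof cases
      case 1
      with high show ?thesis by (simp add: block_offset_def)
    next
      case 2
      with False one show ?thesis by (simp add: block_offset_def)
    next
      case 3
      with False one step show ?thesis by (simp add: block_offset_def)
    next
      case 4
      with False lose_i(1) mono[of 3 4] show ?thesis by (simp add: block_offset_def)
    qed
  qed
  then show ?thesis using assms(3,4) prefix_count_block_coalition[of i m r X] by simp
qed

lemma block_coalition_maximal_not_wins2:
  assumes T: "T \<subseteq> {1..4*m}" and lose: "\<not> wins2 m T"
    and above: "dominates T (block_coalition m X)"
  shows "dominates (block_coalition m X) T"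
  unfolding dominates_def
proof
  fix j
  show "prefix_count T j \<le> prefix_count (block_coalition m X) j"
  proof (cases rule: block_cases[where j = j and m = m])
    case (block i r)
    then show ?thesis using not_wins2_block_upper_bound[OF lose above] by simp
  next
    case beyond
    have "prefix_count T j = prefix_count T (4*m)" using prefix_count_beyond[OF T beyond] .
    also have "\<dots> \<le> 2*m" using not_wins2_prefix_count_le[OF lose] by simp
    finally show ?thesis using prefix_count_block_coalition_beyond[OF beyond] by simp
  qed
qed

lemma card_ceilings_wins2: "2^m \<le> card (ceilings (4*m) (game_of (4*m) (wins2 m)))"
proof (rule two_power_le_card_if_block_coalitions)
  show "finite (ceilings (4*m) (game_of (4*m) (wins2 m)))"
    by (rule finite_subset[OF ceilings_subset_Pow]) simp
  show "block_coalition m X \<in> ceilings (4*m) (game_of (4*m) (wins2 m))" for X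
    using block_coalition_subset not_wins2_block_coalition block_coalition_maximal_not_wins2
    by (rule ceiling_if_dominance_maximal)
qed

lemma card_roofs_wins2: "card (roofs (4*m) (game_of (4*m) (wins2 m))) \<le> 2*m"
proof -
  define B :: "nat \<times> bool \<Rightarrow> (nat \<times> nat) set" where
    "B = (\<lambda>(i, b). if b then {(4*i + 1, 2*i + 1), (4*i + 3, 2*i + 2)} else {(4*i + 4, 2*i + 3)})"
  have "card (roofs (4*m) (game_of (4*m) (wins2 m))) \<le> card ({..<m} \<times> (UNIV :: bool set))"
  proof (rule card_roofs_le[OF dominance_monotone_wins2, where B = B])
    fix S
    show "wins2 m S \<longleftrightarrow> (\<exists>c\<in>{..<m} \<times> UNIV. \<forall>(j, k)\<in>B c. k \<le> prefix_count S j)"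
    proof
      assume "wins2 m S"
      then obtain i where "i < m" "2*i + 3 \<le> prefix_count S (4*i + 4) \<or>
          2*i + 1 \<le> prefix_count S (4*i + 1) \<and> 2*i + 2 \<le> prefix_count S (4*i + 3)"
        unfolding wins2_def by (auto simp del: prefix_count.simps)
      then show "\<exists>c\<in>{..<m} \<times> UNIV. \<forall>(j, k)\<in>B c. k \<le> prefix_count S j"
        by (intro bexI[of _ "(i, \<not> 2*i + 3 \<le> prefix_count S (4*i + 4))"]) (auto simp: B_def)
    next
      assume "\<exists>c\<in>{..<m} \<times> UNIV. \<forall>(j, k)\<in>B c. k \<le> prefix_count S j"
      then obtain i b where "i < m" "\<forall>(j, k)\<in>B (i, b). k \<le> prefix_count S j" by blast
      then show "wins2 m S"
        unfolding wins2_def B_def by (cases b) (auto simp del: prefix_count.simps)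
    qed
  qed simp
  then show ?thesis by simp
qed

lemma length_outputs_le: "length (outputs M x t) \<le> t"
  by (induction t) (auto split: option.split)

lemma length_le_length_encode: "length L \<le> length (encode L)"
  by (induction L) (auto simp: encode_def)

lemma card_le_if_outputs_within:
  assumes "outputs_within M x T R" "finite R"
  shows "card R \<le> T"
proof -
  obtain t L where t: "t \<le> T" "outputs M x t = encode L" "set L = R"
    using assms(1) unfolding outputs_within_def by blast
  have "card R \<le> length L" using t(3) card_length by blast
  also have "\<dots> \<le> length (encode L)" by (rule length_le_length_encode)
  also have "\<dots> \<le> t" using length_outputs_le[of M x t] t(2) by simp
  finally show ?thesis using t(1) by simp
qed

lemma inj_on_charvec: "inj_on (charvec n) (Pow {1..n})"
proof (rule inj_onI)
  fix S T assume S: "S \<in> Pow {1..n}" and T: "T \<in> Pow {1..n}"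
    and "charvec n S = charvec n T"
  then have "\<forall>i\<in>set [1..<n+1]. (i \<in> S) = (i \<in> T)"
    unfolding charvec_def map_eq_conv by blast
  moreover have "set [1..<n+1] = {1..n}" by auto
  ultimately have eq: "\<forall>i\<in>{1..n}. (i \<in> S) = (i \<in> T)" by (simp only:)
  show "S = T"
  proof (rule set_eqI)
    fix x show "x \<in> S \<longleftrightarrow> x \<in> T" using eq S T by (cases "x \<in> {1..n}") auto
  qed
qed

lemma input_size_charvecs_le:
  assumes "F \<subseteq> Pow {1..4*m}" "card F \<le> 2*m" "distinct L" "set L = charvec (4*m) ` F"
  shows "input_size (4*m, L) + 1 \<le> (3*m + 1)^2"
proof -
  have "length L = card (set L)" using assms(3) by (simp add: distinct_card)
  also have "\<dots> = card F"
    using assms(4) card_image[OF inj_on_subset[OF inj_on_charvec assms(1)]] by simp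
  finally have "length L = card F" .
  moreover have "\<forall>v\<in>set L. length v = 4*m" using assms(4) by (auto simp: charvec_def)
  then have "sum_list (map length L) = 4*m * length L" by (induction L) auto
  ultimately have "input_size (4*m, L) = 4*m + 4*m * card F" unfolding input_size_def by simp
  also have "\<dots> \<le> 4*m + 4*m * (2*m)" using assms(2) by simp
  finally show ?thesis by (simp add: power2_eq_square algebra_simps)
qed

lemma exponential_exceeds_polynomial: "\<exists>m. c * (3*m + 1)^e < (2::nat)^m"
proof -
  have "((\<lambda>m::nat. real c * (3 * real m + 1)^e / 2^m) \<longlongrightarrow> 0) sequentially"
    by real_asymp
  then have "eventually (\<lambda>m::nat. real c * (3 * real m + 1)^e / 2^m < 1) sequentially"
    by (rule order_tendstoD) simp
  then obtain m :: nat where "real c * (3 * real m + 1)^e / 2^m < 1"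
    unfolding eventually_sequentially by blast
  then have "real c * (3 * real m + 1)^e < 2^m" by (simp add: divide_less_eq)
  then have "real (c * (3*m + 1)^e) < real (2^m)" by (simp add: add.commute)
  then show ?thesis by (intro exI[of _ m]) (simp only: of_nat_less_iff)
qed

lemma no_poly_time_transformation:
  assumes FA: "\<And>m. FA m \<subseteq> Pow {1..4*m}" "\<And>m. card (FA m) \<le> 2*m"
    and FB: "\<And>m. FB m \<subseteq> Pow {1..4*m}" "\<And>m. 2^m \<le> card (FB m)"
  obtains m L where "distinct L" "set L = charvec (4*m) ` FA m"
    "\<not> outputs_within M (4*m, L) (c * (input_size (4*m, L) + 1) ^ d) (charvec (4*m) ` FB m)"
proof -
  obtain m where m: "c * (3*m + 1)^(2*d) < (2::nat)^m"
    using exponential_exceeds_polynomial[of c "2*d"] by blast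
  have "finite (FA m)" by (rule finite_subset[OF FA(1)]) simp
  then obtain L where L: "distinct L" "set L = charvec (4*m) ` FA m"
    using finite_distinct_list[OF finite_imageI, of "FA m" "charvec (4*m)"] by blast
  have "finite (FB m)" by (rule finite_subset[OF FB(1)]) simp
  have "\<not> outputs_within M (4*m, L) (c * (input_size (4*m, L) + 1) ^ d) (charvec (4*m) ` FB m)"
  proof
    assume "outputs_within M (4*m, L) (c * (input_size (4*m, L) + 1) ^ d) (charvec (4*m) ` FB m)"
    then have "card (charvec (4*m) ` FB m) \<le> c * (input_size (4*m, L) + 1) ^ d"
      using card_le_if_outputs_within \<open>finite (FB m)\<close> by blast
    also have "\<dots> \<le> c * ((3*m + 1)^2) ^ d"
      by (rule mult_le_mono2[OF power_mono[OF input_size_charvecs_le[OF FA L]]]) simp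
    also have "\<dots> = c * (3*m + 1)^(2*d)" by (simp only: power_mult)
    also have "\<dots> < 2^m" by (rule m)
    also have "\<dots> \<le> card (charvec (4*m) ` FB m)"
      using FB(2)[of m] card_image[OF inj_on_subset[OF inj_on_charvec FB(1)]] by simp
    finally show False by simp
  qed
  with L show thesis using that by blast
qed

theorem corollary4:
  shows "(\<nexists>M :: 's machine. poly_ceilings_to_roofs M) \<and>
         (\<nexists>M :: 's machine. poly_roofs_to_ceilings M)"
proof (intro conjI notI)
  assume "\<exists>M :: 's machine. poly_ceilings_to_roofs M"
  then obtain M :: "'s machine" and c d where transform: "\<forall>n v L.
      canonical_linear n v \<and> distinct L \<and> set L = charvec n ` ceilings n v \<longrightarrow>
      outputs_within M (n, L) (c * (input_size (n, L) + 1) ^ d) (charvec n ` roofs n v)"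
    unfolding poly_ceilings_to_roofs_def by blast
  obtain m L where "distinct L" "set L = charvec (4*m) ` ceilings (4*m) (game_of (4*m) (wins1 m))"
    "\<not> outputs_within M (4*m, L) (c * (input_size (4*m, L) + 1) ^ d)
       (charvec (4*m) ` roofs (4*m) (game_of (4*m) (wins1 m)))"
    using ceilings_subset_Pow card_ceilings_wins1 roofs_subset_Pow card_roofs_wins1
    by (rule no_poly_time_transformation)
  with transform[rule_format, of "4*m" "game_of (4*m) (wins1 m)" L]
    canonical_linear_game_of[OF dominance_monotone_wins1] show False by blast
next
  assume "\<exists>M :: 's machine. poly_roofs_to_ceilings M"
  then obtain M :: "'s machine" and c d where transform: "\<forall>n v L.
      canonical_linear n v \<and> distinct L \<and> set L = charvec n ` roofs n v \<longrightarrow>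
      outputs_within M (n, L) (c * (input_size (n, L) + 1) ^ d) (charvec n ` ceilings n v)"
    unfolding poly_roofs_to_ceilings_def by blast
  obtain m L where "distinct L" "set L = charvec (4*m) ` roofs (4*m) (game_of (4*m) (wins2 m))"
    "\<not> outputs_within M (4*m, L) (c * (input_size (4*m, L) + 1) ^ d)
       (charvec (4*m) ` ceilings (4*m) (game_of (4*m) (wins2 m)))"
    using roofs_subset_Pow card_roofs_wins2 ceilings_subset_Pow card_ceilings_wins2
    by (rule no_poly_time_transformation)
  with transform[rule_format, of "4*m" "game_of (4*m) (wins2 m)" L]
    canonical_linear_game_of[OF dominance_monotone_wins2] show False by blast
qed

end
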